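(* Let $B'\in\mathcal X^+_{N-2}$ and $B\in{}'\mathcal X^{0,+}_{N-2}$ with $B'\preceq B$. Then $B'\in{}'\mathcal X^{0,+}_{N-2}$.
   Context: Let $N\ge 3$ be an odd integer and $F=\mathbb Z/2\mathbb Z$. For integers $i,j$ let $[i,j]=\{h\in\mathbb Z: i\le h\le j\}$ (empty if $i>j$). Let $S_N=[1,N]$. The set of all subsets of $S_N$ is an $F$-vector space with sum $X+X'=(X\cup X')-(X\cap X')$; let $E_N$ be the subspace of subsets of even cardinality. A $2$-element subset $\{i,j\}\subseteq S_N$ is written $ij$ when either ($i<j$ and $j-i$ odd) or ($i>j$ and $i-j$ even); each $2$-element subset has exactly one such writing. Let $\mathcal P_N$ be the set of all finite sets $B$ of pairwise disjoint $2$-element subsets of $S_N$; for $B\in\mathcal P_N$ let $\langle B\rangle$ be the $F$-subspace of $E_N$ spanned by the elements of $B$, $\mathrm{supp}(B)=\bigcup_{X\in B}X$, $B^0=\{\{i,j\}\in B: i-j\text{ even}\}$, $B^1=\{\{i,j\}\in B: i-j\text{ odd}\}$. A set $X\subseteq S_N$ is $0$-covered (resp. $1$-covered) by $B^1$ if there are $a_1b_1,\dots,a_sb_s\in B^1$ ($s\ge 0$, so $a_r<b_r$) with $X=[a_1,b_1]\sqcup\dots\sqcup[a_s,b_s]$ (resp. $X=[a_1,b_1]\sqcup\dots\sqcup[a_s,b_s]\sqcup\{u\}$ for some $u$), disjoint unions. Let ${}^*\mathcal P_N$ be the set of $B\in\mathcal P_N$ such that: for every $ij\in B^1$ the set $[i+1,j-1]$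 is $0$-covered by $B^1$; and there is a sequence $i_*(B)=(i_1,\dots,i_{2s})$ in $S_N$ with $B^0=\{i_{2s}i_1,i_{2s-1}i_2,\dots,i_{s+1}i_s\}$ (so $s=|B^0|$; the sequence is unique) such that, if $s\ge1$, each of $[i_1+1,i_2-1],\dots,[i_{s-1}+1,i_s-1],[i_{s+1}+1,i_{s+2}-1],\dots,[i_{2s-1}+1,i_{2s}-1]$ is $0$-covered by $B^1$. For $B\in{}^*\mathcal P_N$ with $i_*(B)=(i_1,\dots,i_{2s})$ consider: (I) $s=0$, or $s\ge1$ and $[1,i_1-1]$ and $[i_{2s}+1,N]$ are $0$-covered by $B^1$; (II) $N\notin\mathrm{supp}(B)$ and either $s=0$, or $s$ is odd and either (i) $[1,i_1-1]$ is $1$-covered and $[i_{2s}+1,N-1]$ is $0$-covered by $B^1$, or (ii) $[1,i_1-1]$ is $0$-covered and $[i_{2s}+1,N-1]$ is $1$-covered by $B^1$; (III) (I) holds and, if $s$ is even then $\{i,N\}\in B$ for some even $i$, if $s$ is odd then $\{i,N\}\in B$ for some odd $i$. Let $\mathcal X^+_{N-2}$, $\mathcal X^-_{N-2}$ be the sets of $B\in{}^*\mathcal P_N$ satisfying (II), (III) respectively, and $\mathcal X_{N-2}=\mathcal X^+_{N-2}\sqcup\mathcal X^-_{N-2}$. For $B\in\mathcal X^+_{N-2}$ with $s\ge1$ there is a unique $u_B$: in case (i), $u_B\in[1,i_1-1]$ with $[1,u_B-1]$, $[u_B+1,i_1-1]$ $0$-covered by $B^1$ ($u_B$ odd); in case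 (ii), $u_B\in[i_{2s}+1,N-1]$ with $[i_{2s}+1,u_B-1]$, $[u_B+1,N-1]$ $0$-covered by $B^1$ ($u_B$ even). Let ${}'\mathcal X^{0,+}_{N-2}=\{B\in\mathcal X^+_{N-2}:|B^0|=0,\ N-1\notin\mathrm{supp}(B)\}$. Put $[[ij]]=[i,j]$ if $i<j$ and $[[ij]]=[i,N]\cup[1,j]$ if $i>j$. For $B\in\mathcal X_{N-2}$ define ${}'\epsilon(B)\in E_N$: ${}'\epsilon(B)=\sum_{ij\in B}[[ij]]$ if $B\in\mathcal X^-_{N-2}$ or if $B\in\mathcal X^+_{N-2}$ with $|B^0|=0$; ${}'\epsilon(B)=\sum_{ij\in B}[[ij]]+[u_B,N]$ if $B\in\mathcal X^+_{N-2}$, $|B^0|$ odd, $u_B$ even; ${}'\epsilon(B)=\sum_{ij\in B}[[ij]]+\{N\}+[1,u_B]$ if $B\in\mathcal X^+_{N-2}$, $|B^0|$ odd, $u_B$ odd. For $B,B'\in\mathcal X_{N-2}$ write $B'\preceq B$ if there is a sequence $B'=B_0,\dots,B_h=B$ ($h\ge0$) in $\mathcal X_{N-2}$ with ${}'\epsilon(B_k)\in\langle B_{k+1}\rangle$ for $k=0,\dots,h-1$. *)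

theory Defs
  imports Main
begin

definition symd :: "nat set \<Rightarrow> nat set \<Rightarrow> nat set" where
  "symd X Y = (X - Y) \<union> (Y - X)"

(* F_2-sum (iterated symmetric difference) of a finite family f indexed by C *)
definition xsumI :: "('a \<Rightarrow> nat set) \<Rightarrow> 'a set \<Rightarrow> nat set" where
  "xsumI f C = {x. odd (card {p \<in> C. x \<in> f p})}"

definition spanB :: "nat set set \<Rightarrow> nat set set" where
  "spanB B = {xsumI (\<lambda>X. X) C | C. C \<subseteq> B}"

(* the pair {i,j} is written ij *)
definition writ :: "nat \<Rightarrow> nat \<Rightarrow> bool" where
  "writ i j \<longleftrightarrow> (i < j \<and> odd (j - i)) \<or> (i > j \<and> even (i - j))"

definition wpair :: "nat set \<Rightarrow> nat \<times> nat" where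
  "wpair p = (THE ij. p = {fst ij, snd ij} \<and> writ (fst ij) (snd ij))"

definition PN :: "nat \<Rightarrow> nat set set \<Rightarrow> bool" where
  "PN N B \<longleftrightarrow> finite B \<and> (\<forall>p\<in>B. p \<subseteq> {1..N} \<and> card p = 2)
     \<and> (\<forall>p\<in>B. \<forall>q\<in>B. p \<noteq> q \<longrightarrow> p \<inter> q = {})"

definition B0 :: "nat set set \<Rightarrow> nat set set" where
  "B0 B = {p \<in> B. even (Max p - Min p)}"

definition B1 :: "nat set set \<Rightarrow> nat set set" where
  "B1 B = {p \<in> B. odd (Max p - Min p)}"

(* for ij in B^1 (so i < j): the interval [i,j] *)
definition iv :: "nat set \<Rightarrow> nat set" where
  "iv p = {fst (wpair p) .. snd (wpair p)}"

definition cov0 :: "nat set set \<Rightarrow> nat set \<Rightarrow> bool" where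
  "cov0 B X \<longleftrightarrow> (\<exists>C. C \<subseteq> B1 B \<and> (\<forall>p\<in>C. \<forall>q\<in>C. p \<noteq> q \<longrightarrow> iv p \<inter> iv q = {})
       \<and> X = \<Union>(iv ` C))"

definition cov1 :: "nat set set \<Rightarrow> nat set \<Rightarrow> bool" where
  "cov1 B X \<longleftrightarrow> (\<exists>C u. C \<subseteq> B1 B \<and> (\<forall>p\<in>C. \<forall>q\<in>C. p \<noteq> q \<longrightarrow> iv p \<inter> iv q = {})
       \<and> u \<notin> \<Union>(iv ` C) \<and> X = \<Union>(iv ` C) \<union> {u})"

(* xs = (i_1,...,i_{2s}) as a 0-indexed list: xs!k = i_{k+1} *)
definition seqok :: "nat set set \<Rightarrow> nat list \<Rightarrow> bool" where
  "seqok B xs \<longleftrightarrow> even (length xs) \<and> sorted_wrt (<) xs \<and>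
     (let s = length xs div 2 in
        B0 B = {{xs ! (2*s - 1 - k), xs ! k} | k. k < s}
      \<and> (\<forall>k<s. writ (xs ! (2*s - 1 - k)) (xs ! k))
      \<and> (\<forall>j. j + 1 < 2*s \<and> j + 1 \<noteq> s \<longrightarrow> cov0 B {xs ! j + 1 .. xs ! (j+1) - 1}))"

definition iseq :: "nat set set \<Rightarrow> nat list" where
  "iseq B = (THE xs. seqok B xs)"

definition starP :: "nat \<Rightarrow> nat set set \<Rightarrow> bool" where
  "starP N B \<longleftrightarrow> PN N B \<and> (\<forall>p\<in>B1 B. cov0 B {fst (wpair p) + 1 .. snd (wpair p) - 1})
     \<and> (\<exists>xs. seqok B xs)"

definition condI :: "nat \<Rightarrow> nat set set \<Rightarrow> bool" where
  "condI N B \<longleftrightarrow> (let xs = iseq B; s = length xs div 2 in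
     s = 0 \<or> (cov0 B {1 .. hd xs - 1} \<and> cov0 B {last xs + 1 .. N}))"

definition condII :: "nat \<Rightarrow> nat set set \<Rightarrow> bool" where
  "condII N B \<longleftrightarrow> N \<notin> \<Union>B \<and> (let xs = iseq B; s = length xs div 2 in
     s = 0 \<or> (odd s \<and>
       ((cov1 B {1 .. hd xs - 1} \<and> cov0 B {last xs + 1 .. N - 1})
      \<or> (cov0 B {1 .. hd xs - 1} \<and> cov1 B {last xs + 1 .. N - 1}))))"

definition condIII :: "nat \<Rightarrow> nat set set \<Rightarrow> bool" where
  "condIII N B \<longleftrightarrow> condI N B \<and> (let s = length (iseq B) div 2 in
     (even s \<longrightarrow> (\<exists>i. even i \<and> {i, N} \<in> B)) \<and> (odd s \<longrightarrow> (\<exists>i. odd i \<and> {i, N} \<in> B)))"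

definition XP :: "nat \<Rightarrow> nat set set set" where
  "XP N = {B. starP N B \<and> condII N B}"

definition XM :: "nat \<Rightarrow> nat set set set" where
  "XM N = {B. starP N B \<and> condIII N B}"

definition XX :: "nat \<Rightarrow> nat set set set" where
  "XX N = XP N \<union> XM N"

definition X0P' :: "nat \<Rightarrow> nat set set set" where
  "X0P' N = {B \<in> XP N. card (B0 B) = 0 \<and> N - 1 \<notin> \<Union>B}"

definition uB :: "nat \<Rightarrow> nat set set \<Rightarrow> nat" where
  "uB N B = (let xs = iseq B; i1 = hd xs; i2s = last xs in
     if cov1 B {1 .. i1 - 1} \<and> cov0 B {i2s + 1 .. N - 1}
     then (THE u. u \<in> {1 .. i1 - 1} \<and> cov0 B {1 .. u - 1} \<and> cov0 B {u + 1 .. i1 - 1})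
     else (THE u. u \<in> {i2s + 1 .. N - 1} \<and> cov0 B {i2s + 1 .. u - 1} \<and> cov0 B {u + 1 .. N - 1}))"

definition dbr :: "nat \<Rightarrow> nat set \<Rightarrow> nat set" where
  "dbr N p = (let i = fst (wpair p); j = snd (wpair p) in
     if i < j then {i .. j} else {i .. N} \<union> {1 .. j})"

definition eps' :: "nat \<Rightarrow> nat set set \<Rightarrow> nat set" where
  "eps' N B = (let S = xsumI (dbr N) B in
     if B \<in> XM N \<or> card (B0 B) = 0 then S
     else if even (uB N B) then symd S {uB N B .. N}
     else symd (symd S {N}) {1 .. uB N B})"

definition stepR :: "nat \<Rightarrow> nat set set \<Rightarrow> nat set set \<Rightarrow> bool" where
  "stepR N B1' B2' \<longleftrightarrow> B1' \<in> XX N \<and> B2' \<in> XX N \<and> eps' N B1' \<in> spanB B2'"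

definition preceq :: "nat \<Rightarrow> nat set set \<Rightarrow> nat set set \<Rightarrow> bool" where
  "preceq N B' B \<longleftrightarrow> B' \<in> XX N \<and> B \<in> XX N \<and> (stepR N)\<^sup>*\<^sup>* B' B"

end

theory Submission
  imports Defs
begin

text \<open>
  If \<open>\<epsilon>'(C)\<close> lies in the span of \<open>B \<in> 'X\<^sup>0\<^sup>,\<^sup>+\<close>, it is a union of pairs of \<open>B\<close>. These all
  have odd difference and avoid \<open>N\<close> and \<open>N - 1\<close>, so \<open>\<epsilon>'(C)\<close> has as many odd as even
  elements and misses \<open>N\<close> and \<open>N - 1\<close>. This fails in every case to be excluded: for
  \<open>C \<in> X\<^sup>-\<close> the point \<open>N\<close> lies in \<open>\<epsilon>'(C)\<close>; for \<open>C \<in> X\<^sup>+\<close> without even pairs, \<open>N - 1\<close> lies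
  in \<open>\<epsilon>'(C)\<close> as soon as it lies in the support of \<open>C\<close>; and for \<open>C \<in> X\<^sup>+\<close> with \<open>s = |C\<^sup>0|\<close>
  positive (hence odd), the intervals of the odd pairs nest like brackets, so \<open>\<epsilon>'(C)\<close> consists
  of whole odd pairs together with the endpoints \<open>i\<^sub>k, i\<^sub>2\<^sub>s\<^sub>+\<^sub>1\<^sub>-\<^sub>k\<close> (\<open>k\<close> odd) of the even
  pairs, which all have the parity of \<open>i\<^sub>1\<close>. Hence \<open>'X\<^sup>0\<^sup>,\<^sup>+\<close> is closed under going down
  along \<open>\<preceq>\<close>.
\<close>

section \<open>Pairs\<close>

lemma card_2_Min_Max:
  fixes p :: "nat set"
  assumes "card p = 2"
  shows "Min p < Max p" "p = {Min p, Max p}"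
proof -
  obtain a b where "a \<noteq> b" "p = {a, b}" using assms by (auto simp: card_2_iff)
  then show "Min p < Max p" "p = {Min p, Max p}" by (cases "a < b"; auto simp: insert_commute)+
qed

lemma wpair_card_2:
  fixes p :: "nat set"
  assumes "card p = 2"
  shows "wpair p = (if odd (Max p - Min p) then (Min p, Max p) else (Max p, Min p))"
  unfolding wpair_def
proof (rule the_equality)
  let ?c = "if odd (Max p - Min p) then (Min p, Max p) else (Max p, Min p)"
  have mm: "Min p < Max p" "p = {Min p, Max p}" using card_2_Min_Max[OF assms] by auto
  show "p = {fst ?c, snd ?c} \<and> writ (fst ?c) (snd ?c)"
    using mm unfolding writ_def by (auto simp: insert_commute)
  fix ij assume ij: "p = {fst ij, snd ij} \<and> writ (fst ij) (snd ij)"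
  then have "{fst ij, snd ij} = {Min p, Max p}" using mm by simp
  then have "ij = (Min p, Max p) \<or> ij = (Max p, Min p)" by (cases ij) (auto simp: doubleton_eq_iff)
  then show "ij = ?c" using ij mm unfolding writ_def by auto
qed

lemma PN_memD:
  assumes "PN N C" "p \<in> C"
  shows "card p = 2" "p \<subseteq> {1..N}" "Min p < Max p" "p = {Min p, Max p}" "1 \<le> Min p" "Max p \<le> N"
    "Min p \<in> p" "Max p \<in> p"
proof -
  show c: "card p = 2" "p \<subseteq> {1..N}" using assms unfolding PN_def by blast+
  show m: "Min p < Max p" "p = {Min p, Max p}" using card_2_Min_Max[OF c(1)] by auto
  then show "Min p \<in> p" "Max p \<in> p" by (metis insertCI)+
  then show "1 \<le> Min p" "Max p \<le> N" using c(2) by auto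
qed

lemma PN_mem_between:
  assumes "PN N C" "p \<in> C" "x \<in> p"
  shows "Min p \<le> x" "x \<le> Max p"
proof -
  have "finite p" using PN_memD(1)[OF assms(1,2)] by (metis card.infinite zero_neq_numeral)
  then show "Min p \<le> x" "x \<le> Max p" using assms(3) by simp_all
qed

lemma PN_finite: "PN N C \<Longrightarrow> finite C"
  unfolding PN_def by blast

lemma PN_disjoint:
  assumes "PN N C" "p \<in> C" "q \<in> C" "x \<in> p" "x \<in> q"
  shows "p = q"
  using assms unfolding PN_def by blast

lemma B0_subset: "B0 C \<subseteq> C" and B1_subset: "B1 C \<subseteq> C"
  unfolding B0_def B1_def by auto

lemma B0_or_B1: "p \<in> C \<Longrightarrow> p \<in> B0 C \<or> p \<in> B1 C"
  unfolding B0_def B1_def by auto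

lemma B0_not_B1: "p \<in> B0 C \<Longrightarrow> p \<notin> B1 C"
  unfolding B0_def B1_def by auto

lemma Union_B0_Union_B1_disjoint:
  assumes "PN N C"
  shows "\<Union>(B0 C) \<inter> \<Union>(B1 C) = {}"
  using PN_disjoint[OF assms] B0_subset B1_subset B0_not_B1 by blast

lemma
  assumes "PN N C" "p \<in> B1 C"
  shows wpair_B1: "wpair p = (Min p, Max p)"
    and iv_B1: "iv p = {Min p..Max p}"
    and dbr_B1: "dbr N p = {Min p..Max p}"
proof -
  have c: "card p = 2" and lt: "Min p < Max p"
    using PN_memD(1,3)[OF assms(1)] assms(2) B1_subset by blast+
  have "odd (Max p - Min p)" using assms(2) unfolding B1_def by auto
  then show w: "wpair p = (Min p, Max p)" using wpair_card_2[OF c] by simp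
  show "iv p = {Min p..Max p}" "dbr N p = {Min p..Max p}" unfolding iv_def dbr_def Let_def w
    using lt by simp_all
qed

lemma dbr_B0:
  assumes "PN N C" "p \<in> B0 C"
  shows "dbr N p = {Max p..N} \<union> {1..Min p}"
proof -
  have c: "card p = 2" and lt: "Min p < Max p"
    using PN_memD(1,3)[OF assms(1)] assms(2) B0_subset by blast+
  have "\<not> odd (Max p - Min p)" using assms(2) unfolding B0_def by auto
  then have "wpair p = (Max p, Min p)" using wpair_card_2[OF c] by simp
  then show ?thesis unfolding dbr_def Let_def using lt by simp
qed

lemma dbr_subset:
  assumes "PN N C" "p \<in> C"
  shows "dbr N p \<subseteq> {1..N}"
  using B0_or_B1[OF assms(2)] PN_memD[OF assms] dbr_B0[OF assms(1)] dbr_B1[OF assms(1)] by auto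

lemma spanB_Union:
  assumes PN: "PN N B" and X: "X \<in> spanB B"
  obtains D where "D \<subseteq> B" "X = \<Union>D"
proof -
  obtain D where D: "D \<subseteq> B" "X = xsumI (\<lambda>X. X) D" using X unfolding spanB_def by blast
  have "xsumI (\<lambda>X. X) D = \<Union>D"
  proof (intro equalityI subsetI)
    fix x assume "x \<in> xsumI (\<lambda>X. X) D"
    then have "odd (card {p \<in> D. x \<in> p})" unfolding xsumI_def by simp
    then have "{p \<in> D. x \<in> p} \<noteq> {}" by (intro notI) simp
    then show "x \<in> \<Union>D" by blast
  next
    fix x assume "x \<in> \<Union>D"
    then obtain p0 where p0: "p0 \<in> D" "x \<in> p0" by blast
    have "p = p0" if "p \<in> D" "x \<in> p" for p
      using PN_disjoint[OF PN _ _ that(2) p0(2)] that(1) p0(1) D(1) by blast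
    then have "{p \<in> D. x \<in> p} = {p0}" using p0 by blast
    then show "x \<in> xsumI (\<lambda>X. X) D" unfolding xsumI_def by simp
  qed
  then show ?thesis using that D by simp
qed

section \<open>Parity of unions of odd pairs\<close>

lemma card_odd_pair_parity:
  fixes p :: "nat set"
  assumes "card p = 2" "odd (Max p - Min p)"
  shows "card {x \<in> p. even x \<longleftrightarrow> b} = 1"
proof -
  define m M where "m = Min p" and "M = Max p"
  have p: "p = {m, M}" "m < M" using card_2_Min_Max[OF assms(1)] unfolding m_def M_def by blast+
  have "M = m + (M - m)" using p(2) by simp
  then have "even M \<longleftrightarrow> odd m"
    using assms(2) unfolding m_def[symmetric] M_def[symmetric] by (metis even_add)
  then have "{x \<in> p. even x \<longleftrightarrow> b} = (if even m \<longleftrightarrow> b then {m} else {M})" unfolding p(1) by auto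
  then show ?thesis by simp
qed

definition parity_balanced :: "nat set \<Rightarrow> bool" where
  "parity_balanced X \<longleftrightarrow> card {x \<in> X. even x} = card {x \<in> X. odd x}"

lemma parity_balanced_iff: "parity_balanced X \<longleftrightarrow> card {x \<in> X. even x \<longleftrightarrow> b} = card {x \<in> X. even x \<longleftrightarrow> \<not> b}"
  unfolding parity_balanced_def by (cases b) (simp_all add: eq_commute)

lemma card_Union_odd_pairs_parity:
  fixes D :: "nat set set"
  assumes "finite D" "\<forall>p\<in>D. \<forall>q\<in>D. p \<noteq> q \<longrightarrow> p \<inter> q = {}"
    and pairs: "\<forall>p\<in>D. card p = 2 \<and> odd (Max p - Min p)"
  shows "card {x \<in> \<Union>D. even x \<longleftrightarrow> b} = card D"
proof -
  have fin: "finite p" if "p \<in> D" for p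
    using pairs that by (intro card_ge_0_finite) simp
  have "{x \<in> \<Union>D. even x \<longleftrightarrow> b} = (\<Union>p\<in>D. {x \<in> p. even x \<longleftrightarrow> b})" by blast
  also have "card \<dots> = (\<Sum>p\<in>D. card {x \<in> p. even x \<longleftrightarrow> b})"
    using assms(1,2) fin by (intro card_UN_disjoint) auto
  also have "\<dots> = (\<Sum>p\<in>D. 1)"
  proof (rule sum.cong)
    fix p assume "p \<in> D"
    then show "card {x \<in> p. even x \<longleftrightarrow> b} = 1" using pairs by (intro card_odd_pair_parity) auto
  qed simp
  also have "\<dots> = card D" by simp
  finally show ?thesis .
qed

lemma parity_balanced_Union_odd_pairs:
  fixes D :: "nat set set"
  assumes "finite D" "\<forall>p\<in>D. \<forall>q\<in>D. p \<noteq> q \<longrightarrow> p \<inter> q = {}"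
    and "\<forall>p\<in>D. card p = 2 \<and> odd (Max p - Min p)"
  shows "parity_balanced (\<Union>D)"
  using card_Union_odd_pairs_parity[OF assms, of True] card_Union_odd_pairs_parity[OF assms, of False]
  unfolding parity_balanced_iff[of _ True] by simp

section \<open>Coverings by intervals of odd pairs\<close>

lemma starP_PN: "starP N C \<Longrightarrow> PN N C"
  unfolding starP_def by blast

lemma starP_inner_cov0:
  assumes "starP N C" "p \<in> B1 C"
  shows "cov0 C {Min p + 1..Max p - 1}"
proof -
  have "cov0 C {fst (wpair p) + 1 .. snd (wpair p) - 1}" using assms unfolding starP_def by blast
  then show ?thesis using wpair_B1[OF starP_PN[OF assms(1)] assms(2)] by simp
qed

lemma cov0E:
  assumes "cov0 C R"
  obtains T where "T \<subseteq> B1 C" "\<forall>r\<in>T. \<forall>r'\<in>T. r \<noteq> r' \<longrightarrow> iv r \<inter> iv r' = {}" "R = \<Union>(iv ` T)"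
  using assms unfolding cov0_def by metis

lemma cov0_subfamily:
  assumes "T \<subseteq> B1 C" "\<forall>r\<in>T. \<forall>r'\<in>T. r \<noteq> r' \<longrightarrow> iv r \<inter> iv r' = {}" "T' \<subseteq> T"
  shows "cov0 C (\<Union>(iv ` T'))"
  unfolding cov0_def
proof (intro exI conjI)
  show "T' \<subseteq> B1 C" using assms by blast
  show "\<forall>r\<in>T'. \<forall>r'\<in>T'. r \<noteq> r' \<longrightarrow> iv r \<inter> iv r' = {}" using assms by blast
qed (rule refl)

lemma cov0_even_card:
  assumes "PN N C" "cov0 C R"
  shows "even (card R)"
proof -
  obtain T where T: "T \<subseteq> B1 C" "\<forall>r\<in>T. \<forall>r'\<in>T. r \<noteq> r' \<longrightarrow> iv r \<inter> iv r' = {}" "R = \<Union>(iv ` T)"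
    using assms(2) by (rule cov0E)
  have "finite T" using T(1) B1_subset assms(1) unfolding PN_def by (meson finite_subset)
  moreover have "even (card (iv r))" if "r \<in> T" for r
  proof -
    have "odd (Max r - Min r)" "Min r < Max r"
      using that T(1) B1_subset PN_memD(3)[OF assms(1)] unfolding B1_def by blast+
    then show ?thesis using iv_B1[OF assms(1)] that T(1) by auto
  qed
  moreover have "finite (iv r)" for r unfolding iv_def by simp
  ultimately show ?thesis using T(2,3) by (simp add: card_UN_disjoint dvd_sum)
qed

definition saturated :: "nat set set \<Rightarrow> nat set \<Rightarrow> bool" where
  "saturated C R \<longleftrightarrow> R \<subseteq> \<Union>(B1 C) \<and> (\<forall>q\<in>C. q \<inter> R \<noteq> {} \<longrightarrow> q \<subseteq> R)"

lemma saturated_UN: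
  assumes "\<And>r. r \<in> T \<Longrightarrow> saturated C (f r)"
  shows "saturated C (\<Union>r\<in>T. f r)"
  unfolding saturated_def
proof (intro conjI ballI impI)
  show "(\<Union>r\<in>T. f r) \<subseteq> \<Union>(B1 C)" using assms unfolding saturated_def by blast
  fix q assume q: "q \<in> C" "q \<inter> (\<Union>r\<in>T. f r) \<noteq> {}"
  then obtain r where r: "r \<in> T" "q \<inter> f r \<noteq> {}" by blast
  then have "q \<subseteq> f r" using assms[OF r(1)] q(1) unfolding saturated_def by blast
  then show "q \<subseteq> (\<Union>r\<in>T. f r)" using r(1) by blast
qed

lemma saturated_Un:
  assumes "saturated C R" "saturated C R'"
  shows "saturated C (R \<union> R')"
  using saturated_UN[of "{R, R'}" C id] assms by (simp; blast)

lemma saturated_B1_pair: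
  assumes "PN N C" "p \<in> B1 C"
  shows "saturated C p"
  unfolding saturated_def
proof (intro conjI ballI impI)
  show "p \<subseteq> \<Union>(B1 C)" using assms(2) by blast
  fix q assume q: "q \<in> C" "q \<inter> p \<noteq> {}"
  then obtain x where "x \<in> q" "x \<in> p" by blast
  then have "q = p" using PN_disjoint[OF assms(1) q(1)] assms(2) B1_subset by blast
  then show "q \<subseteq> p" by simp
qed

lemma saturated_B1_interval:
  assumes "starP N C" "p \<in> B1 C"
  shows "saturated C {Min p..Max p}"
  using assms(2)
proof (induction "Max p - Min p" arbitrary: p rule: less_induct)
  case less
  have PN: "PN N C" using starP_PN[OF assms(1)] .
  obtain T where T: "T \<subseteq> B1 C" "{Min p + 1..Max p - 1} = \<Union>(iv ` T)"
    using starP_inner_cov0[OF assms(1) less.prems] by (rule cov0E)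
  have "saturated C (iv r)" if r: "r \<in> T" for r
  proof -
    have rB1: "r \<in> B1 C" using r T(1) by blast
    have "iv r \<subseteq> {Min p + 1..Max p - 1}" using r T(2) by blast
    moreover have "Min r < Max r" using PN_memD(3)[OF PN] rB1 B1_subset by blast
    ultimately have "Max r - Min r < Max p - Min p" unfolding iv_B1[OF PN rB1] by auto
    then show ?thesis using less.hyps rB1 iv_B1[OF PN rB1] by simp
  qed
  then have inner: "saturated C {Min p + 1..Max p - 1}" unfolding T(2) by (rule saturated_UN)
  have pC: "p \<in> C" using less.prems B1_subset by blast
  have "Min p < Max p" using PN_memD(3)[OF PN pC] .
  have pair: "{Min p, Max p} = p" using PN_memD(4)[OF PN pC] by (rule sym)
  from \<open>Min p < Max p\<close> have "{Min p..Max p} = {Min p, Max p} \<union> {Min p + 1..Max p - 1}" by auto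
  then have "{Min p..Max p} = p \<union> {Min p + 1..Max p - 1}" unfolding pair .
  then show ?case using saturated_Un[OF saturated_B1_pair[OF PN less.prems] inner] by simp
qed

lemma cov0_saturated:
  assumes "starP N C" "cov0 C R"
  shows "saturated C R"
proof -
  obtain T where T: "T \<subseteq> B1 C" "R = \<Union>(iv ` T)" using assms(2) by (rule cov0E)
  have "saturated C (iv r)" if "r \<in> T" for r
    using saturated_B1_interval[OF assms(1)] iv_B1[OF starP_PN[OF assms(1)]] that T(1) by auto
  then show ?thesis unfolding T(2) by (rule saturated_UN)
qed

lemma B1_pair_position:
  assumes star: "starP N C" and p: "p \<in> B1 C" and q: "q \<in> C" "q \<noteq> p"
  shows "(Min p < Min q \<and> Max q < Max p) \<or> (Min q \<notin> {Min p..Max p} \<and> Max q \<notin> {Min p..Max p})"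
proof (cases "Min q \<in> {Min p..Max p} \<or> Max q \<in> {Min p..Max p}")
  case True
  have PN: "PN N C" using starP_PN[OF star] .
  have pC: "p \<in> C" using p B1_subset by blast
  have ends: "Min q \<in> q" "Max q \<in> q" using PN_memD(7,8)[OF PN q(1)] by blast+
  then have "q \<inter> {Min p..Max p} \<noteq> {}" using True by blast
  then have "q \<subseteq> {Min p..Max p}"
    using saturated_B1_interval[OF star p] q(1) unfolding saturated_def by blast
  then have "Min q \<in> {Min p..Max p}" "Max q \<in> {Min p..Max p}" using ends by blast+
  moreover have "Min p \<notin> q" "Max p \<notin> q"
    using PN_disjoint[OF PN q(1) pC] PN_memD(7,8)[OF PN pC] q(2) by blast+
  then have "Min q \<noteq> Min p" "Max q \<noteq> Max p" using ends by auto
  ultimately show ?thesis by (intro disjI1) auto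
qed simp

lemma dbr_B1_endpoints:
  assumes star: "starP N C" and p: "p \<in> B1 C" and q: "q \<in> C"
  shows "Min p \<in> dbr N q \<longleftrightarrow> Max p \<in> dbr N q"
proof (cases "q = p")
  case True
  have "Min p < Max p" using PN_memD(3)[OF starP_PN[OF star]] p B1_subset by blast
  then show ?thesis using dbr_B1[OF starP_PN[OF star] p] True by simp
next
  case False
  have PN: "PN N C" using starP_PN[OF star] .
  have p_ends: "1 \<le> Min p" "Min p < Max p" "Max p \<le> N"
    using PN_memD(3,5,6)[OF PN] p B1_subset by blast+
  have "Min q < Max q" using PN_memD(3)[OF PN q] .
  have dbr_q: "dbr N q = {Min q..Max q} \<or> dbr N q = {Max q..N} \<union> {1..Min q}"
    using B0_or_B1[OF q] dbr_B0[OF PN] dbr_B1[OF PN] by blast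
  from B1_pair_position[OF star p q False] show ?thesis
  proof
    assume inside: "Min p < Min q \<and> Max q < Max p"
    from dbr_q show ?thesis
    proof
      assume "dbr N q = {Min q..Max q}"
      then show ?thesis using inside by auto
    next
      assume "dbr N q = {Max q..N} \<union> {1..Min q}"
      then show ?thesis using inside p_ends \<open>Min q < Max q\<close> by auto
    qed
  next
    assume outside: "Min q \<notin> {Min p..Max p} \<and> Max q \<notin> {Min p..Max p}"
    from dbr_q show ?thesis
    proof
      assume "dbr N q = {Min q..Max q}"
      then show ?thesis using outside p_ends by auto
    next
      assume "dbr N q = {Max q..N} \<union> {1..Min q}"
      then show ?thesis using outside p_ends by auto
    qed
  qed
qed

lemma cov1E:
  assumes "cov1 C R"
  obtains T w where "T \<subseteq> B1 C" "\<forall>r\<in>T. \<forall>r'\<in>T. r \<noteq> r' \<longrightarrow> iv r \<inter> iv r' = {}"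
    "w \<notin> \<Union>(iv ` T)" "R = \<Union>(iv ` T) \<union> {w}"
  using assms unfolding cov1_def by metis

lemma cov1_interval_split:
  assumes PN: "PN N C" and cov1: "cov1 C {lo..hi}" and lo: "1 \<le> lo"
  obtains u where "u \<in> {lo..hi}" "cov0 C {lo..u - 1}" "cov0 C {u + 1..hi}"
proof -
  obtain T w where T: "T \<subseteq> B1 C" "\<forall>r\<in>T. \<forall>r'\<in>T. r \<noteq> r' \<longrightarrow> iv r \<inter> iv r' = {}"
    and w: "w \<notin> \<Union>(iv ` T)" and lohi: "{lo..hi} = \<Union>(iv ` T) \<union> {w}"
    using cov1 by (rule cov1E)
  have w_in: "w \<in> {lo..hi}" using lohi by blast
  have side: "iv r \<subseteq> {..<w} \<or> iv r \<subseteq> {w<..}" if "r \<in> T" for r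
  proof -
    have "w \<notin> {Min r..Max r}" using w that iv_B1[OF PN] T(1) by blast
    then show ?thesis using iv_B1[OF PN] that T(1) by fastforce
  qed
  have "{lo..w - 1} = {lo..hi} \<inter> {..<w}" using w_in lo by auto
  also have "\<dots> = \<Union>(iv ` T) \<inter> {..<w}" unfolding lohi by blast
  also have "\<dots> = \<Union>(iv ` {r \<in> T. iv r \<subseteq> {..<w}})" using side by fastforce
  finally have left: "cov0 C {lo..w - 1}" using cov0_subfamily[OF T] by simp
  have "{w + 1..hi} = {lo..hi} \<inter> {w<..}" using w_in by auto
  also have "\<dots> = \<Union>(iv ` T) \<inter> {w<..}" unfolding lohi by blast
  also have "\<dots> = \<Union>(iv ` {r \<in> T. iv r \<subseteq> {w<..}})" using side by fastforce
  finally have right: "cov0 C {w + 1..hi}" using cov0_subfamily[OF T] by simp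
  show ?thesis using that w_in left right .
qed

lemma split_point_not_in_support:
  assumes star: "starP N C" and u: "u \<in> {lo..hi}" "cov0 C {lo..u - 1}" "cov0 C {u + 1..hi}"
    and lo: "lo - 1 \<notin> \<Union>(B1 C)" and hi: "hi + 1 \<notin> \<Union>(B1 C)" and not_B0: "u \<notin> \<Union>(B0 C)"
  shows "u \<notin> \<Union>C"
proof
  assume "u \<in> \<Union>C"
  then obtain q where q: "q \<in> C" "u \<in> q" by blast
  have PN: "PN N C" using starP_PN[OF star] .
  have qB1: "q \<in> B1 C" using q not_B0 B0_or_B1[OF q(1)] by blast
  have lt: "Min q < Max q" and pair: "q = {Min q, Max q}" using PN_memD(3,4)[OF PN q(1)] by blast+
  have "{Min q..Max q} \<subseteq> \<Union>(B1 C)"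
    using saturated_B1_interval[OF star qB1] unfolding saturated_def by blast
  then have outside: "lo - 1 \<notin> {Min q..Max q}" "hi + 1 \<notin> {Min q..Max q}" using lo hi by blast+
  have closed_left: "q \<subseteq> {lo..u - 1}" if "q \<inter> {lo..u - 1} \<noteq> {}"
    using cov0_saturated[OF star u(2)] q(1) that unfolding saturated_def by blast
  have closed_right: "q \<subseteq> {u + 1..hi}" if "q \<inter> {u + 1..hi} \<noteq> {}"
    using cov0_saturated[OF star u(3)] q(1) that unfolding saturated_def by blast
  have "u = Min q \<or> u = Max q" using q(2) pair by blast
  then show False
  proof
    assume "u = Min q"
    then have "Max q \<in> q \<inter> {u + 1..hi}" using lt u(1) outside(2) pair by auto
    then have "q \<subseteq> {u + 1..hi}" using closed_right by blast
    then have "u \<in> {u + 1..hi}" using q(2) by blast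
    then show False by simp
  next
    assume u_Max: "u = Max q"
    then have "Min q \<in> q \<inter> {lo..u - 1}" using lt u(1) outside(1) pair by auto
    then have "q \<subseteq> {lo..u - 1}" using closed_left by blast
    then have "u \<in> {lo..u - 1}" using q(2) by blast
    then show False using lt u_Max by auto
  qed
qed

lemma split_point_unique:
  assumes star: "starP N C"
    and bounds: "lo - 1 \<notin> \<Union>(B1 C)" "hi + 1 \<notin> \<Union>(B1 C)" "\<forall>x\<in>{lo..hi}. x \<notin> \<Union>(B0 C)"
    and u: "u \<in> {lo..hi}" "cov0 C {lo..u - 1}" "cov0 C {u + 1..hi}"
    and v: "v \<in> {lo..hi}" "cov0 C {lo..v - 1}" "cov0 C {v + 1..hi}"
  shows "u = v"
proof -
  have no_less: "\<not> x < y"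
    if x: "x \<in> {lo..hi}" "cov0 C {lo..x - 1}" "cov0 C {x + 1..hi}" and y: "cov0 C {lo..y - 1}" for x y
  proof
    assume "x < y"
    then have "x \<in> {lo..y - 1}" using x(1) by auto
    then have "x \<in> \<Union>C" using cov0_saturated[OF star y] B1_subset unfolding saturated_def by blast
    moreover have "x \<notin> \<Union>C"
      using split_point_not_in_support[OF star x bounds(1,2)] bounds(3) x(1) by blast
    ultimately show False by contradiction
  qed
  show ?thesis using no_less[OF u v(2)] no_less[OF v u(2)] by simp
qed

lemma the_split_point:
  assumes star: "starP N C" and cov1: "cov1 C {lo..hi}" and lo: "1 \<le> lo"
    and bounds: "lo - 1 \<notin> \<Union>(B1 C)" "hi + 1 \<notin> \<Union>(B1 C)" "\<forall>x\<in>{lo..hi}. x \<notin> \<Union>(B0 C)"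
  defines "u \<equiv> THE u. u \<in> {lo..hi} \<and> cov0 C {lo..u - 1} \<and> cov0 C {u + 1..hi}"
  shows "u \<in> {lo..hi}" "cov0 C {lo..u - 1}" "cov0 C {u + 1..hi}" "u \<notin> \<Union>C"
proof -
  obtain u0 where u0: "u0 \<in> {lo..hi}" "cov0 C {lo..u0 - 1}" "cov0 C {u0 + 1..hi}"
    using cov1_interval_split[OF starP_PN[OF star] cov1 lo] .
  have "u \<in> {lo..hi} \<and> cov0 C {lo..u - 1} \<and> cov0 C {u + 1..hi}"
    unfolding u_def
  proof (rule theI)
    show "u0 \<in> {lo..hi} \<and> cov0 C {lo..u0 - 1} \<and> cov0 C {u0 + 1..hi}" using u0 by blast
    fix v assume "v \<in> {lo..hi} \<and> cov0 C {lo..v - 1} \<and> cov0 C {v + 1..hi}"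
    then show "v = u0" using split_point_unique[OF star bounds _ _ _ u0] by blast
  qed
  then show u: "u \<in> {lo..hi}" "cov0 C {lo..u - 1}" "cov0 C {u + 1..hi}" by blast+
  show "u \<notin> \<Union>C" using split_point_not_in_support[OF star u bounds(1,2)] bounds(3) u(1) by blast
qed

section \<open>The sequence \<open>i\<^sub>*\<close>\<close>

lemma seqokD:
  assumes "seqok C xs"
  shows "length xs = 2 * (length xs div 2)" "sorted_wrt (<) xs"
    "B0 C = {{xs ! (2 * (length xs div 2) - 1 - k), xs ! k} | k. k < length xs div 2}"
    "\<And>j. j + 1 < length xs \<Longrightarrow> j + 1 \<noteq> length xs div 2 \<Longrightarrow> cov0 C {xs ! j + 1..xs ! (j + 1) - 1}"
  using assms unfolding seqok_def Let_def by auto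

lemma seqok_set:
  assumes "seqok C xs"
  shows "set xs = \<Union>(B0 C)"
proof -
  define s where "s = length xs div 2"
  have len: "length xs = 2 * s" using seqokD(1)[OF assms] unfolding s_def .
  have B0: "B0 C = {{xs ! (2 * s - 1 - k), xs ! k} | k. k < s}"
    using seqokD(3)[OF assms] unfolding s_def .
  have "set xs = (\<Union>k<s. {xs ! (2 * s - 1 - k), xs ! k})"
  proof
    show "set xs \<subseteq> (\<Union>k<s. {xs ! (2 * s - 1 - k), xs ! k})"
    proof
      fix y assume "y \<in> set xs"
      then obtain i where i: "i < 2 * s" "y = xs ! i" using len by (auto simp: in_set_conv_nth)
      show "y \<in> (\<Union>k<s. {xs ! (2 * s - 1 - k), xs ! k})"
      proof (cases "i < s")
        case True
        then show ?thesis using i by blast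
      next
        case False
        define k where "k = 2 * s - 1 - i"
        have "k < s" "y = xs ! (2 * s - 1 - k)" using False i unfolding k_def by auto
        then show ?thesis by blast
      qed
    qed
    show "(\<Union>k<s. {xs ! (2 * s - 1 - k), xs ! k}) \<subseteq> set xs"
    proof (rule UN_least)
      fix k assume "k \<in> {..<s}"
      then have "2 * s - 1 - k < length xs" "k < length xs" using len by auto
      then show "{xs ! (2 * s - 1 - k), xs ! k} \<subseteq> set xs" by simp
    qed
  qed
  also have "\<dots> = \<Union>(B0 C)" unfolding B0 by blast
  finally show ?thesis .
qed

lemma iseq_eq:
  assumes "seqok C xs"
  shows "iseq C = xs"
  unfolding iseq_def
proof (rule the_equality)
  show "seqok C xs" by fact
  fix ys assume ys: "seqok C ys"
  have "set ys = set xs" using seqok_set[OF assms] seqok_set[OF ys] by simp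
  moreover have "sorted ys \<and> distinct ys" "sorted xs \<and> distinct xs"
    using seqokD(2)[OF assms] seqokD(2)[OF ys] unfolding strict_sorted_iff by blast+
  ultimately show "ys = xs" using sorted_distinct_set_unique by blast
qed

lemma list_nth_crossing:
  fixes xs :: "nat list"
  assumes "xs ! 0 < x" "x < xs ! (length xs - 1)" "x \<notin> set xs"
  shows "\<exists>j. j + 1 < length xs \<and> xs ! j < x \<and> x < xs ! (j + 1)"
proof -
  define i where "i = (LEAST i. x < xs ! i)"
  have x_less: "x < xs ! i" unfolding i_def using assms(2) by (rule LeastI)
  have "i \<le> length xs - 1" unfolding i_def using assms(2) by (rule Least_le)
  moreover have "i \<noteq> 0" using x_less assms(1) by (cases "i = 0") auto
  moreover have "\<not> x < xs ! (i - 1)"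
    using \<open>i \<noteq> 0\<close> not_less_Least[of "i - 1" "\<lambda>i. x < xs ! i"] unfolding i_def[symmetric] by simp
  moreover have "length xs \<noteq> 0" using assms(1,2) by (cases xs) auto
  ultimately have "i - 1 + 1 < length xs" "xs ! (i - 1) \<le> x" "x < xs ! (i - 1 + 1)"
    using x_less by auto
  moreover have "xs ! (i - 1) \<noteq> x" using assms(3) \<open>i - 1 + 1 < length xs\<close> by (metis add_lessD1 nth_mem)
  ultimately show ?thesis by (metis le_neq_implies_less)
qed

locale star_seq =
  fixes N :: nat and C :: "nat set set" and xs :: "nat list" and s :: nat
  assumes star: "starP N C" and seq: "seqok C xs" and length_xs: "length xs = 2 * s"
begin

text \<open>With 0-based indexing \<open>xs ! k = i\<^sub>k\<^sub>+\<^sub>1\<close> and \<open>xs ! mirror k = i\<^sub>2\<^sub>s\<^sub>-\<^sub>k\<close>, so for \<open>k < s\<close>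
  the \<open>k\<close>-th pair of \<open>C\<^sup>0\<close> is \<open>{xs ! mirror k, xs ! k}\<close>.\<close>

abbreviation mirror :: "nat \<Rightarrow> nat" where
  "mirror k \<equiv> 2 * s - 1 - k"

lemma PN: "PN N C"
  using starP_PN[OF star] .

lemma B0_eq: "B0 C = (\<lambda>k. {xs ! mirror k, xs ! k}) ` {..<s}"
  using seqokD(3)[OF seq] length_xs by auto

lemma gap_cov0: "j + 1 < 2 * s \<Longrightarrow> j + 1 \<noteq> s \<Longrightarrow> cov0 C {xs ! j + 1..xs ! (j + 1) - 1}"
  using seqokD(4)[OF seq] length_xs by simp

lemma set_xs: "set xs = \<Union>(B0 C)"
  using seqok_set[OF seq] .

lemma iseq: "iseq C = xs"
  using iseq_eq[OF seq] .

lemma nth_le_iff: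
  assumes "i < 2 * s" "j < 2 * s"
  shows "xs ! i \<le> xs ! j \<longleftrightarrow> i \<le> j"
proof -
  have less: "xs ! i < xs ! j" if "i < j" "j < 2 * s" for i j
    using sorted_wrt_nth_less[OF seqokD(2)[OF seq]] length_xs that by simp
  show ?thesis using less[of i j] less[of j i] assms by (cases i j rule: linorder_cases) auto
qed

lemma nth_less_iff: "i < 2 * s \<Longrightarrow> j < 2 * s \<Longrightarrow> xs ! i < xs ! j \<longleftrightarrow> i < j"
  using nth_le_iff[of j i] by (simp add: not_le[symmetric])

lemma B0_pair: "k < s \<Longrightarrow> {xs ! mirror k, xs ! k} \<in> B0 C"
  unfolding B0_eq by blast

lemma Min_Max_B0_pair:
  assumes "k < s"
  shows "Min {xs ! mirror k, xs ! k} = xs ! k" "Max {xs ! mirror k, xs ! k} = xs ! mirror k"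
proof -
  have "xs ! k < xs ! mirror k" using nth_less_iff[of k "mirror k"] assms by simp
  then show "Min {xs ! mirror k, xs ! k} = xs ! k" "Max {xs ! mirror k, xs ! k} = xs ! mirror k"
    by simp_all
qed

lemma inj_on_B0_pair: "inj_on (\<lambda>k. {xs ! mirror k, xs ! k}) {..<s}"
proof
  fix k k' assume k: "k \<in> {..<s}" "k' \<in> {..<s}"
    and eq: "{xs ! mirror k, xs ! k} = {xs ! mirror k', xs ! k'}"
  then have "Min {xs ! mirror k, xs ! k} = Min {xs ! mirror k', xs ! k'}" by simp
  then have "xs ! k = xs ! k'" using Min_Max_B0_pair(1) k by simp
  then show "k = k'" using nth_le_iff[of k k'] nth_le_iff[of k' k] k by auto
qed

lemma card_B0: "card (B0 C) = s"
  unfolding B0_eq using card_image[OF inj_on_B0_pair] by simp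

lemma dbr_B0_pair: "k < s \<Longrightarrow> dbr N {xs ! mirror k, xs ! k} = {xs ! mirror k..N} \<union> {1..xs ! k}"
  using dbr_B0[OF PN B0_pair] Min_Max_B0_pair by simp

lemma nth_in_B0: "i < 2 * s \<Longrightarrow> xs ! i \<in> \<Union>(B0 C)"
  using set_xs length_xs by (metis nth_mem)

lemma nth_not_in_B1: "i < 2 * s \<Longrightarrow> xs ! i \<notin> \<Union>(B1 C)"
  using nth_in_B0 Union_B0_Union_B1_disjoint[OF PN] by blast

lemma nth_range:
  assumes "i < 2 * s"
  shows "1 \<le> xs ! i" "xs ! i \<le> N"
proof -
  obtain q where q: "q \<in> C" "xs ! i \<in> q" using nth_in_B0[OF assms] B0_subset by blast
  then show "1 \<le> xs ! i" "xs ! i \<le> N" using PN_memD(2)[OF PN q(1)] by auto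
qed

lemma B0_point_bounds:
  assumes "x \<in> \<Union>(B0 C)"
  shows "xs ! 0 \<le> x" "x \<le> xs ! (2 * s - 1)"
proof -
  obtain i where "i < 2 * s" "x = xs ! i" using assms set_xs length_xs by (metis in_set_conv_nth)
  then show "xs ! 0 \<le> x" "x \<le> xs ! (2 * s - 1)" using nth_le_iff by auto
qed

text \<open>Consecutive points of the first half are separated by 0-covered, hence even, gaps.\<close>

lemma parity_nth: "k < s \<Longrightarrow> (even (xs ! k) \<longleftrightarrow> even (xs ! 0)) \<longleftrightarrow> even k"
proof (induction k)
  case 0
  then show ?case by simp
next
  case (Suc k)
  have "even (card {xs ! k + 1..xs ! (k + 1) - 1})"
    using cov0_even_card[OF PN gap_cov0] Suc.prems by simp
  moreover have "xs ! k < xs ! (k + 1)" using nth_less_iff Suc.prems by simp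
  ultimately have "odd (xs ! (k + 1) - xs ! k)" by auto
  then show ?case using Suc by auto
qed

lemma parity_mirror:
  assumes "k < s"
  shows "even (xs ! mirror k) \<longleftrightarrow> even (xs ! k)"
proof -
  have "even (Max {xs ! mirror k, xs ! k} - Min {xs ! mirror k, xs ! k})"
    using B0_pair[OF assms] unfolding B0_def by blast
  then have "even (xs ! mirror k - xs ! k)" using Min_Max_B0_pair[OF assms] by simp
  moreover have "xs ! k < xs ! mirror k" using nth_less_iff[of k "mirror k"] assms by simp
  ultimately show ?thesis by auto
qed

lemma card_dbr_off_B1:
  assumes x: "x \<notin> \<Union>(B1 C)" "1 \<le> x" "x \<le> N"
  shows "card {p \<in> C. x \<in> dbr N p} = card {k. k < s \<and> (x \<le> xs ! k \<or> xs ! mirror k \<le> x)}"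
proof -
  let ?K = "{k. k < s \<and> (x \<le> xs ! k \<or> xs ! mirror k \<le> x)}"
  have not_B1: "p \<notin> B1 C" if "x \<in> dbr N p" for p
  proof
    assume p: "p \<in> B1 C"
    then have "{Min p..Max p} \<subseteq> \<Union>(B1 C)"
      using saturated_B1_interval[OF star] unfolding saturated_def by blast
    then show False using that x(1) dbr_B1[OF PN p] by auto
  qed
  have "{p \<in> C. x \<in> dbr N p} = {p \<in> B0 C. x \<in> dbr N p}"
  proof (intro equalityI subsetI)
    fix p assume "p \<in> {p \<in> C. x \<in> dbr N p}"
    then show "p \<in> {p \<in> B0 C. x \<in> dbr N p}" using not_B1 B0_or_B1 by blast
  qed (use B0_subset in blast)
  also have "\<dots> = (\<lambda>k. {xs ! mirror k, xs ! k}) ` {k. k < s \<and> x \<in> dbr N {xs ! mirror k, xs ! k}}"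
    unfolding B0_eq by blast
  also have "{k. k < s \<and> x \<in> dbr N {xs ! mirror k, xs ! k}} = ?K"
    using dbr_B0_pair x(2,3) by auto
  finally have "{p \<in> C. x \<in> dbr N p} = (\<lambda>k. {xs ! mirror k, xs ! k}) ` ?K" .
  moreover have "inj_on (\<lambda>k. {xs ! mirror k, xs ! k}) ?K"
    using inj_on_B0_pair by (rule inj_on_subset) auto
  ultimately show ?thesis by (simp add: card_image)
qed

lemma count_at_B0_point:
  assumes "k0 < s"
  shows "{k. k < s \<and> (xs ! k0 \<le> xs ! k \<or> xs ! mirror k \<le> xs ! k0)} = {k0..<s}"
    and "{k. k < s \<and> (xs ! mirror k0 \<le> xs ! k \<or> xs ! mirror k \<le> xs ! mirror k0)} = {k0..<s}"
proof -
  have "xs ! k0 \<le> xs ! k \<longleftrightarrow> k0 \<le> k" if "k < s" for k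
    using nth_le_iff[of k0 k] that assms by simp
  moreover have "\<not> xs ! mirror k \<le> xs ! k0" if "k < s" for k
    using nth_le_iff[of "mirror k" k0] that assms by simp
  ultimately show "{k. k < s \<and> (xs ! k0 \<le> xs ! k \<or> xs ! mirror k \<le> xs ! k0)} = {k0..<s}"
    by auto
  have "\<not> xs ! mirror k0 \<le> xs ! k" if "k < s" for k
    using nth_le_iff[of "mirror k0" k] that assms by simp
  moreover have "xs ! mirror k \<le> xs ! mirror k0 \<longleftrightarrow> k0 \<le> k" if "k < s" for k
    using nth_le_iff[of "mirror k" "mirror k0"] that assms by auto
  ultimately show "{k. k < s \<and> (xs ! mirror k0 \<le> xs ! k \<or> xs ! mirror k \<le> xs ! mirror k0)} = {k0..<s}"
    by auto
qed

lemma count_outside: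
  assumes "x < xs ! 0 \<or> xs ! (2 * s - 1) < x"
  shows "{k. k < s \<and> (x \<le> xs ! k \<or> xs ! mirror k \<le> x)} = {..<s}"
proof -
  have "xs ! 0 \<le> xs ! k" "xs ! mirror k \<le> xs ! (2 * s - 1)" if "k < s" for k
    using nth_le_iff[of 0 k] nth_le_iff[of "mirror k" "2 * s - 1"] that by auto
  then show ?thesis using assms by fastforce
qed

lemma count_middle:
  assumes "xs ! (s - 1) < x" "x < xs ! s"
  shows "{k. k < s \<and> (x \<le> xs ! k \<or> xs ! mirror k \<le> x)} = {}"
proof -
  have "xs ! k \<le> xs ! (s - 1)" "xs ! s \<le> xs ! mirror k" if "k < s" for k
    using nth_le_iff[of k "s - 1"] nth_le_iff[of s "mirror k"] that by auto
  then show ?thesis using assms by fastforce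
qed

end

section \<open>The sets \<open>\<epsilon>'\<close>\<close>

lemma dbr_containing_N:
  assumes PN: "PN N C"
  shows "{p \<in> C. N \<in> dbr N p} = B0 C \<union> {p \<in> B1 C. N \<in> p}"
proof (intro equalityI subsetI)
  fix p assume "p \<in> {p \<in> C. N \<in> dbr N p}"
  then have p: "p \<in> C" "N \<in> dbr N p" by auto
  show "p \<in> B0 C \<union> {p \<in> B1 C. N \<in> p}"
  proof (cases "p \<in> B1 C")
    case True
    then have "Max p = N" using p PN_memD(6)[OF PN p(1)] dbr_B1[OF PN True] by simp
    then show ?thesis using True PN_memD(8)[OF PN p(1)] by simp
  qed (use p B0_or_B1 in blast)
next
  fix p assume p: "p \<in> B0 C \<union> {p \<in> B1 C. N \<in> p}"
  show "p \<in> {p \<in> C. N \<in> dbr N p}"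
  proof (cases "p \<in> B0 C")
    case True
    then have "p \<in> C" using B0_subset by blast
    then show ?thesis using dbr_B0[OF PN True] PN_memD(6)[OF PN] by auto
  next
    case False
    then have p: "p \<in> B1 C" "N \<in> p" using p by auto
    then have "p \<in> C" using B1_subset by blast
    then show ?thesis using dbr_B1[OF PN p(1)] PN_mem_between[OF PN _ p(2)] by auto
  qed
qed

lemma card_B1_containing_N:
  assumes PN: "PN N C" and odd_N: "odd N" and iN: "{i, N} \<in> C"
  shows "card {p \<in> B1 C. N \<in> p} = (if even i then 1 else 0)"
proof -
  have "i < N" using PN_memD(1,2)[OF PN iN] by (cases "i = N") auto
  have "odd (N - i) \<longleftrightarrow> even i" using \<open>i < N\<close> odd_N by presburger
  then have iN_B1: "{i, N} \<in> B1 C \<longleftrightarrow> even i"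
    using iN \<open>i < N\<close> unfolding B1_def by (auto simp: max_def min_def)
  have sub: "{p \<in> B1 C. N \<in> p} \<subseteq> {{i, N}}" using PN_disjoint[OF PN _ iN] B1_subset by blast
  show ?thesis
  proof (cases "even i")
    case True
    then have "{i, N} \<in> {p \<in> B1 C. N \<in> p}" using iN_B1 by simp
    then have single: "{p \<in> B1 C. N \<in> p} = {{i, N}}" using sub by blast
    show ?thesis unfolding single using True by simp
  next
    case False
    have empty: "{p \<in> B1 C. N \<in> p} = {}" using False sub iN_B1 by blast
    show ?thesis unfolding empty using False by simp
  qed
qed

lemma N_mem_eps'_XM:
  assumes odd_N: "odd N" and XM: "C \<in> XM N"
  shows "N \<in> eps' N C"
proof -
  have star: "starP N C" and III: "condIII N C" using XM unfolding XM_def by auto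
  have PN: "PN N C" using starP_PN[OF star] .
  obtain xs where seq: "seqok C xs" using star unfolding starP_def by blast
  define s where "s = length xs div 2"
  interpret star_seq N C xs s
    using star seq seqokD(1)[OF seq] unfolding s_def by unfold_locales
  have "finite (B0 C)" using B0_subset PN_finite[OF PN] by (rule finite_subset)
  moreover have "finite {p \<in> B1 C. N \<in> p}"
    by (rule finite_subset[OF _ PN_finite[OF PN]]) (use B1_subset in blast)
  moreover have "B0 C \<inter> {p \<in> B1 C. N \<in> p} = {}" using B0_not_B1 by blast
  ultimately have count: "card {p \<in> C. N \<in> dbr N p} = s + card {p \<in> B1 C. N \<in> p}"
    unfolding dbr_containing_N[OF PN] by (simp add: card_Un_disjoint card_B0)
  obtain i where i: "{i, N} \<in> C" "even i \<longleftrightarrow> even s"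
    using III unfolding condIII_def Let_def iseq length_xs by (cases "even s") auto
  then have "odd (card {p \<in> C. N \<in> dbr N p})"
    using count card_B1_containing_N[OF PN odd_N i(1)] by simp
  then show ?thesis unfolding eps'_def Let_def xsumI_def using XM by simp
qed

lemma N_minus_1_mem_eps':
  assumes PN: "PN N C" and no_B0: "card (B0 C) = 0" and N: "N \<notin> \<Union>C" and N1: "N - 1 \<in> \<Union>C"
  shows "N - 1 \<in> eps' N C"
proof -
  have "finite (B0 C)" using B0_subset PN_finite[OF PN] by (rule finite_subset)
  then have all_B1: "p \<in> B1 C" if "p \<in> C" for p using no_B0 B0_or_B1[OF that] by simp
  obtain p0 where p0: "p0 \<in> C" "N - 1 \<in> p0" using N1 by blast
  have "{p \<in> C. N - 1 \<in> dbr N p} = {p0}"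
  proof (intro equalityI subsetI)
    fix p assume "p \<in> {p \<in> C. N - 1 \<in> dbr N p}"
    then have p: "p \<in> C" "N - 1 \<in> dbr N p" by auto
    have "Max p \<noteq> N" using N PN_memD(8)[OF PN p(1)] p(1) by blast
    then have "Max p = N - 1" using p(2) dbr_B1[OF PN all_B1[OF p(1)]] PN_memD(6)[OF PN p(1)] by auto
    then have "N - 1 \<in> p" using PN_memD(8)[OF PN p(1)] by simp
    then show "p \<in> {p0}" using PN_disjoint[OF PN p(1) p0(1) _ p0(2)] by blast
  next
    fix p assume "p \<in> {p0}"
    then show "p \<in> {p \<in> C. N - 1 \<in> dbr N p}"
      using dbr_B1[OF PN all_B1[OF p0(1)]] PN_mem_between[OF PN p0] p0(1) by auto
  qed
  then show ?thesis unfolding eps'_def Let_def xsumI_def using no_B0 by simp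
qed

locale XP_seq = star_seq +
  assumes odd_N: "odd N" and condII: "condII N C" and not_XM: "C \<notin> XM N" and s_pos: "0 < s"
begin

abbreviation i_first :: nat where "i_first \<equiv> xs ! 0"

abbreviation i_last :: nat where "i_last \<equiv> xs ! (2 * s - 1)"

lemma N_not_in_support: "N \<notin> \<Union>C"
  using condII unfolding condII_def by simp

lemma s_odd: "odd s"
  using condII s_pos unfolding condII_def Let_def iseq length_xs by auto

lemma i_first_range: "1 \<le> i_first" "i_first \<le> i_last"
  using nth_range(1)[of 0] nth_le_iff[of 0 "2 * s - 1"] s_pos by auto

lemma i_last_less_N: "i_last < N"
proof -
  have "i_last \<in> \<Union>C" using nth_in_B0[of "2 * s - 1"] B0_subset s_pos by auto
  then show ?thesis
    using nth_range(2)[of "2 * s - 1"] N_not_in_support s_pos by (cases "i_last = N") auto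
qed

lemma hd_last_xs: "hd xs = i_first" "last xs = i_last"
proof -
  have "xs \<noteq> []" using s_pos length_xs by auto
  then show "hd xs = i_first" "last xs = i_last"
    using length_xs by (simp_all add: hd_conv_nth last_conv_nth)
qed

lemma condII_sides:
  "(cov1 C {1..i_first - 1} \<and> cov0 C {i_last + 1..N - 1})
    \<or> (cov0 C {1..i_first - 1} \<and> cov1 C {i_last + 1..N - 1})"
  using condII s_pos unfolding condII_def Let_def iseq length_xs hd_last_xs by auto

lemma uB_eq:
  "uB N C = (if cov1 C {1..i_first - 1} \<and> cov0 C {i_last + 1..N - 1}
     then THE u. u \<in> {1..i_first - 1} \<and> cov0 C {1..u - 1} \<and> cov0 C {u + 1..i_first - 1}
     else THE u. u \<in> {i_last + 1..N - 1} \<and> cov0 C {i_last + 1..u - 1} \<and> cov0 C {u + 1..N - 1})"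
  unfolding uB_def iseq hd_last_xs Let_def ..

lemma ends_not_in_B1: "i_first \<notin> \<Union>(B1 C)" "i_last \<notin> \<Union>(B1 C)" "0 \<notin> \<Union>(B1 C)" "N \<notin> \<Union>(B1 C)"
proof -
  have "0 \<notin> \<Union>C" using PN_memD(2)[OF PN] by fastforce
  then show "i_first \<notin> \<Union>(B1 C)" "i_last \<notin> \<Union>(B1 C)" "0 \<notin> \<Union>(B1 C)" "N \<notin> \<Union>(B1 C)"
    using nth_not_in_B1[of 0] nth_not_in_B1[of "2 * s - 1"] s_pos N_not_in_support B1_subset[of C]
    by auto
qed

lemma uB_left:
  assumes cov: "cov1 C {1..i_first - 1}" "cov0 C {i_last + 1..N - 1}"
  shows "odd (uB N C)" "uB N C < i_first" "uB N C \<notin> \<Union>C"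
    "cov0 C {1..uB N C - 1}" "cov0 C {uB N C + 1..i_first - 1}"
proof -
  have no_B0: "\<forall>x\<in>{1..i_first - 1}. x \<notin> \<Union>(B0 C)" using B0_point_bounds(1) by fastforce
  have bounds: "1 - 1 \<notin> \<Union>(B1 C)" "i_first - 1 + 1 \<notin> \<Union>(B1 C)"
    using ends_not_in_B1 i_first_range by simp_all
  note u = the_split_point[OF star cov(1) le_refl bounds no_B0,
      folded uB_eq[unfolded if_P[OF conjI[OF cov]]]]
  show "cov0 C {1..uB N C - 1}" "cov0 C {uB N C + 1..i_first - 1}" "uB N C \<notin> \<Union>C"
    by (fact u(2), fact u(3), fact u(4))
  show "uB N C < i_first" using u(1) i_first_range by auto
  have "even (card {1..uB N C - 1})" using cov0_even_card[OF PN u(2)] .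
  then show "odd (uB N C)" using u(1) by auto
qed

lemma uB_right:
  assumes not_left: "\<not> (cov1 C {1..i_first - 1} \<and> cov0 C {i_last + 1..N - 1})"
  shows "even (uB N C)" "i_last < uB N C" "uB N C \<notin> \<Union>C" "uB N C < N"
    "cov0 C {1..i_first - 1}" "cov0 C {i_last + 1..uB N C - 1}" "cov0 C {uB N C + 1..N - 1}"
proof -
  have cov: "cov0 C {1..i_first - 1}" "cov1 C {i_last + 1..N - 1}" using condII_sides not_left by auto
  have no_B0: "\<forall>x\<in>{i_last + 1..N - 1}. x \<notin> \<Union>(B0 C)" using B0_point_bounds(2) by fastforce
  have bounds: "i_last + 1 - 1 \<notin> \<Union>(B1 C)" "N - 1 + 1 \<notin> \<Union>(B1 C)"
    using ends_not_in_B1 odd_N by (simp_all add: odd_pos)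
  note u = the_split_point[OF star cov(2) le_add2 bounds no_B0,
      folded uB_eq[unfolded if_not_P[OF not_left]]]
  show "cov0 C {i_last + 1..uB N C - 1}" "cov0 C {uB N C + 1..N - 1}" "uB N C \<notin> \<Union>C"
    by (fact u(2), fact u(3), fact u(4))
  show "cov0 C {1..i_first - 1}" using cov(1) .
  show "i_last < uB N C" "uB N C < N" using u(1) odd_N by (auto simp: odd_pos)
  have "even (card {uB N C + 1..N - 1})" using cov0_even_card[OF PN u(3)] .
  then have "even (N - 1 - uB N C)" by simp
  moreover have "N - 1 - uB N C + uB N C = N - 1" using u(1) by auto
  moreover have "even (N - 1)" using odd_N by (simp add: odd_pos)
  ultimately show "even (uB N C)" by (metis even_add)
qed

lemma uB_cases:
  obtains (left) "odd (uB N C)" "uB N C < i_first" "uB N C \<notin> \<Union>C"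
      "cov0 C {1..uB N C - 1}" "cov0 C {uB N C + 1..i_first - 1}" "cov0 C {i_last + 1..N - 1}"
    | (right) "even (uB N C)" "i_last < uB N C" "uB N C \<notin> \<Union>C" "uB N C < N"
      "cov0 C {1..i_first - 1}" "cov0 C {i_last + 1..uB N C - 1}" "cov0 C {uB N C + 1..N - 1}"
proof (cases "cov1 C {1..i_first - 1} \<and> cov0 C {i_last + 1..N - 1}")
  case True
  show ?thesis by (rule left[OF uB_left[OF conjunct1[OF True] conjunct2[OF True]] conjunct2[OF True]])
next
  case False
  show ?thesis by (rule right[OF uB_right[OF False]])
qed

lemma uB_not_in_support: "uB N C \<notin> \<Union>C"
  by (cases rule: uB_cases) auto

text \<open>For odd \<open>u\<^sub>B\<close> the paper's \<open>{N} + [1, u\<^sub>B]\<close> is a disjoint union, as \<open>u\<^sub>B < N\<close>.\<close>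

definition correction :: "nat set" where
  "correction = (if even (uB N C) then {uB N C..N} else insert N {1..uB N C})"

lemma eps'_eq: "eps' N C = symd (xsumI (dbr N) C) correction"
proof -
  have "card (B0 C) \<noteq> 0" using card_B0 s_pos by simp
  then have eq: "eps' N C = (if even (uB N C) then symd (xsumI (dbr N) C) {uB N C..N}
      else symd (symd (xsumI (dbr N) C) {N}) {1..uB N C})"
    using not_XM unfolding eps'_def Let_def by simp
  have "N \<notin> {1..uB N C}" if "odd (uB N C)"
    using that i_first_range i_last_less_N by (cases rule: uB_cases) auto
  then show ?thesis unfolding eq correction_def symd_def by auto
qed

lemma mem_eps'_iff: "x \<in> eps' N C \<longleftrightarrow> odd (card {p \<in> C. x \<in> dbr N p}) \<noteq> (x \<in> correction)"
  unfolding eps'_eq symd_def xsumI_def by auto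

lemma correction_subset: "correction \<subseteq> {1..N}"
  using i_first_range i_last_less_N odd_N by (cases rule: uB_cases) (auto simp: correction_def odd_pos)

lemma N_mem_correction: "N \<in> correction"
  using i_last_less_N by (cases rule: uB_cases) (auto simp: correction_def)

lemma uB_mem_correction: "uB N C \<in> correction"
proof (cases rule: uB_cases)
  case left
  then show ?thesis using odd_pos[OF left(1)] by (simp add: correction_def)
next
  case right
  then show ?thesis by (simp add: correction_def)
qed

lemma not_mem_correction: "i_first \<le> x \<Longrightarrow> x \<le> i_last \<Longrightarrow> x \<notin> correction"
  using i_last_less_N by (cases rule: uB_cases) (auto simp: correction_def)

lemma eps'_subset: "eps' N C \<subseteq> {1..N}"
proof
  fix x assume x: "x \<in> eps' N C"
  show "x \<in> {1..N}"
  proof (cases "x \<in> correction")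
    case True
    then show ?thesis using correction_subset by blast
  next
    case False
    then have "{p \<in> C. x \<in> dbr N p} \<noteq> {}" using x mem_eps'_iff by (intro notI) simp
    then show ?thesis using dbr_subset[OF PN] by blast
  qed
qed

lemma B1_endpoints_mem_eps':
  assumes p: "p \<in> B1 C"
  shows "Min p \<in> eps' N C \<longleftrightarrow> Max p \<in> eps' N C"
proof -
  have "{q \<in> C. Min p \<in> dbr N q} = {q \<in> C. Max p \<in> dbr N q}"
    using dbr_B1_endpoints[OF star p] by blast
  moreover have "Min p \<in> correction \<longleftrightarrow> Max p \<in> correction"
  proof -
    have "{Min p..Max p} \<subseteq> \<Union>C"
      using saturated_B1_interval[OF star p] B1_subset unfolding saturated_def by blast
    then have "uB N C \<notin> {Min p..Max p}" "N \<notin> {Min p..Max p}"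
      using uB_not_in_support N_not_in_support by blast+
    moreover have "1 \<le> Min p" "Min p \<le> Max p" using PN_memD(3,5)[OF PN] p B1_subset by fastforce+
    ultimately show ?thesis unfolding correction_def by auto
  qed
  ultimately show ?thesis using mem_eps'_iff by simp
qed

lemma B0_points_mem_eps':
  assumes k: "k < s"
  shows "xs ! k \<in> eps' N C \<longleftrightarrow> even k" "xs ! mirror k \<in> eps' N C \<longleftrightarrow> even k"
proof -
  have "odd (s - k) \<longleftrightarrow> even k" using s_odd k by (auto simp: even_diff_nat)
  moreover have "xs ! i \<notin> correction" if "i < 2 * s" for i
    using not_mem_correction nth_le_iff[of 0 i] nth_le_iff[of i "2 * s - 1"] that by simp
  moreover have "card {p \<in> C. xs ! i \<in> dbr N p}
      = card {k. k < s \<and> (xs ! i \<le> xs ! k \<or> xs ! mirror k \<le> xs ! i)}" if "i < 2 * s" for i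
    using card_dbr_off_B1[OF nth_not_in_B1 nth_range] that by simp
  ultimately show "xs ! k \<in> eps' N C \<longleftrightarrow> even k" "xs ! mirror k \<in> eps' N C \<longleftrightarrow> even k"
    using count_at_B0_point[OF k] mem_eps'_iff k by simp_all
qed

lemma off_support_outside:
  assumes x: "x \<notin> \<Union>C" "1 \<le> x" "x \<le> N" and outside: "x < i_first \<or> i_last < x"
  shows "x = uB N C \<or> x = N"
proof (rule ccontr)
  assume other: "\<not> (x = uB N C \<or> x = N)"
  have not_cov: "x \<notin> R" if "cov0 C R" for R
    using cov0_saturated[OF star that] x(1) B1_subset unfolding saturated_def by blast
  show False
  proof (cases rule: uB_cases)
    case left
    then have "x \<notin> {1..uB N C - 1}" "x \<notin> {uB N C + 1..i_first - 1}" "x \<notin> {i_last + 1..N - 1}"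
      using not_cov by blast+
    then show False using outside x(2,3) other left(2) i_first_range by auto
  next
    case right
    then have "x \<notin> {1..i_first - 1}" "x \<notin> {i_last + 1..uB N C - 1}" "x \<notin> {uB N C + 1..N - 1}"
      using not_cov by blast+
    then show False using outside x(2,3) other right(2) by auto
  qed
qed

lemma off_support_inside:
  assumes x: "x \<notin> \<Union>C" and inside: "i_first \<le> x" "x \<le> i_last"
  shows "i_first < x" "x < i_last" "xs ! (s - 1) < x" "x < xs ! s"
proof -
  have "i_first \<in> \<Union>C" "i_last \<in> \<Union>C"
    using nth_in_B0[of 0] nth_in_B0[of "2 * s - 1"] s_pos B0_subset by auto
  then have "x \<noteq> i_first" "x \<noteq> i_last" using x by blast+
  then show between: "i_first < x" "x < i_last" using inside by auto
  have "x \<notin> set xs" using x set_xs B0_subset by blast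
  then obtain j where j: "j + 1 < 2 * s" "xs ! j < x" "x < xs ! (j + 1)"
    using list_nth_crossing[of xs x] between length_xs by auto
  have "j + 1 = s"
  proof (rule ccontr)
    assume "j + 1 \<noteq> s"
    then have "{xs ! j + 1..xs ! (j + 1) - 1} \<subseteq> \<Union>C"
      using cov0_saturated[OF star gap_cov0] j(1) B1_subset unfolding saturated_def by blast
    moreover have "x \<in> {xs ! j + 1..xs ! (j + 1) - 1}" using j(2,3) by auto
    ultimately show False using x by blast
  qed
  then show "xs ! (s - 1) < x" "x < xs ! s" using j(2,3) by auto
qed

lemma not_in_support_not_mem_eps':
  assumes x: "x \<notin> \<Union>C"
  shows "x \<notin> eps' N C"
proof
  assume x_eps: "x \<in> eps' N C"
  then have range: "1 \<le> x" "x \<le> N" using eps'_subset by auto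
  have "x \<notin> \<Union>(B1 C)" using x B1_subset by blast
  then have count: "card {p \<in> C. x \<in> dbr N p} = card {k. k < s \<and> (x \<le> xs ! k \<or> xs ! mirror k \<le> x)}"
    using card_dbr_off_B1 range by blast
  show False
  proof (cases "x < i_first \<or> i_last < x")
    case True
    then have "x \<in> correction"
      using off_support_outside[OF x range] N_mem_correction uB_mem_correction by blast
    moreover have "odd (card {p \<in> C. x \<in> dbr N p})" using count count_outside[OF True] s_odd by simp
    ultimately show False using x_eps mem_eps'_iff by simp
  next
    case False
    then have "i_first \<le> x" "x \<le> i_last" by auto
    note between = off_support_inside[OF x this]
    have "card {p \<in> C. x \<in> dbr N p} = 0" using count count_middle[OF between(3,4)] by simp
    moreover have "x \<notin> correction" using not_mem_correction between(1,2) by simp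
    ultimately show False using x_eps mem_eps'_iff by simp
  qed
qed

lemma eps'_decomposition:
  "eps' N C = \<Union>{p \<in> B1 C. p \<subseteq> eps' N C} \<union> (eps' N C \<inter> \<Union>(B0 C))"
proof (intro equalityI subsetI)
  fix x assume x: "x \<in> eps' N C"
  then have "x \<in> \<Union>C" using not_in_support_not_mem_eps' by blast
  then obtain p where p: "p \<in> C" "x \<in> p" by blast
  show "x \<in> \<Union>{p \<in> B1 C. p \<subseteq> eps' N C} \<union> (eps' N C \<inter> \<Union>(B0 C))"
  proof (cases "p \<in> B1 C")
    case True
    have "x = Min p \<or> x = Max p" using p(2) PN_memD(4)[OF PN p(1)] by blast
    then have "Min p \<in> eps' N C" "Max p \<in> eps' N C" using x B1_endpoints_mem_eps'[OF True] by auto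
    then have "p \<subseteq> eps' N C" using PN_memD(4)[OF PN p(1)] by (metis empty_subsetI insert_subset)
    then show ?thesis using True p(2) by blast
  next
    case False
    then show ?thesis using B0_or_B1[OF p(1)] x p(2) by blast
  qed
qed blast

lemma eps'_B0_points_parity:
  assumes y: "y \<in> eps' N C" "y \<in> \<Union>(B0 C)"
  shows "even y \<longleftrightarrow> even i_first"
proof -
  obtain i where i: "i < 2 * s" "y = xs ! i" using y(2) set_xs length_xs by (metis in_set_conv_nth)
  show ?thesis
  proof (cases "i < s")
    case True
    then have "even i" using B0_points_mem_eps'(1) y(1) i(2) by simp
    then show ?thesis using parity_nth True i(2) by simp
  next
    case False
    define k where "k = mirror i"
    have k: "k < s" "mirror k = i" using False i(1) unfolding k_def by auto
    then have "even k" using B0_points_mem_eps'(2)[OF k(1)] y(1) i(2) by simp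
    then show ?thesis using parity_nth[OF k(1)] parity_mirror[OF k(1)] k(2) i(2) by simp
  qed
qed

lemma not_parity_balanced_eps': "\<not> parity_balanced (eps' N C)"
proof
  assume "parity_balanced (eps' N C)"
  define E where "E = eps' N C"
  define D1 where "D1 = {p \<in> B1 C. p \<subseteq> E}"
  define E0 where "E0 = E \<inter> \<Union>(B0 C)"
  define b where "b = even i_first"
  have balanced: "card {x \<in> E. even x \<longleftrightarrow> b} = card {x \<in> E. even x \<longleftrightarrow> \<not> b}"
    using \<open>parity_balanced (eps' N C)\<close> unfolding parity_balanced_iff[of _ b] E_def .
  have E_split: "E = \<Union>D1 \<union> E0" using eps'_decomposition unfolding E_def D1_def E0_def .
  have disjoint: "\<Union>D1 \<inter> E0 = {}"
    using Union_B0_Union_B1_disjoint[OF PN] unfolding D1_def E0_def by blast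
  have E0_parity: "even y \<longleftrightarrow> b" if "y \<in> E0" for y
    using eps'_B0_points_parity that unfolding E0_def E_def b_def by blast
  have "finite E" using eps'_subset unfolding E_def by (rule finite_subset) simp
  then have "finite E0" unfolding E0_def by simp
  moreover have "i_first \<in> E0"
    using B0_points_mem_eps'(1)[OF s_pos] nth_in_B0[of 0] s_pos unfolding E0_def E_def by simp
  ultimately have E0_nonempty: "card E0 > 0" by (auto simp: card_gt_0_iff)
  have "finite D1" using PN_finite[OF PN] B1_subset unfolding D1_def by (auto intro: finite_subset)
  moreover have "\<forall>p\<in>D1. \<forall>q\<in>D1. p \<noteq> q \<longrightarrow> p \<inter> q = {}"
    using PN unfolding D1_def PN_def B1_def by blast
  moreover have "\<forall>p\<in>D1. card p = 2 \<and> odd (Max p - Min p)"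
    using PN_memD(1)[OF PN] B1_subset unfolding D1_def B1_def by blast
  ultimately have D1_count: "card {x \<in> \<Union>D1. even x \<longleftrightarrow> b'} = card D1" for b'
    by (rule card_Union_odd_pairs_parity)
  have "{x \<in> E. even x \<longleftrightarrow> b} = {x \<in> \<Union>D1. even x \<longleftrightarrow> b} \<union> E0"
    using E_split E0_parity by auto
  moreover have "finite {x \<in> \<Union>D1. even x \<longleftrightarrow> b}"
    by (rule finite_subset[OF _ \<open>finite E\<close>]) (use E_split in blast)
  moreover have "{x \<in> \<Union>D1. even x \<longleftrightarrow> b} \<inter> E0 = {}" using disjoint by blast
  ultimately have "card {x \<in> E. even x \<longleftrightarrow> b} = card D1 + card E0"
    using card_Un_disjoint[OF _ \<open>finite E0\<close>] D1_count by simp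
  moreover have "{x \<in> E. even x \<longleftrightarrow> \<not> b} = {x \<in> \<Union>D1. even x \<longleftrightarrow> \<not> b}"
    using E_split E0_parity by auto
  ultimately show False using balanced D1_count E0_nonempty by simp
qed

end

section \<open>Going down along \<open>\<preceq>\<close>\<close>

lemma X0P'_of_eps'_in_spanB:
  assumes odd_N: "odd N" and C: "C \<in> XX N" and B: "B \<in> X0P' N" and span: "eps' N C \<in> spanB B"
  shows "C \<in> X0P' N"
proof -
  have "B \<in> XP N" and no_B0: "card (B0 B) = 0" and N1_B: "N - 1 \<notin> \<Union>B"
    using B unfolding X0P'_def by auto
  then have PN_B: "PN N B" and N_B: "N \<notin> \<Union>B" unfolding XP_def starP_def condII_def by auto
  have "B0 B = {}" using no_B0 B0_subset PN_finite[OF PN_B] by (metis card_0_eq finite_subset)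
  then have B_odd: "\<forall>p\<in>B. card p = 2 \<and> odd (Max p - Min p)"
    using PN_memD(1)[OF PN_B] B0_or_B1 unfolding B1_def by blast
  obtain D where D: "D \<subseteq> B" "eps' N C = \<Union>D" using spanB_Union[OF PN_B span] .
  have "finite D" using D(1) PN_finite[OF PN_B] by (rule finite_subset)
  moreover have "\<forall>p\<in>D. \<forall>q\<in>D. p \<noteq> q \<longrightarrow> p \<inter> q = {}" using D(1) PN_B unfolding PN_def by blast
  moreover have "\<forall>p\<in>D. card p = 2 \<and> odd (Max p - Min p)" using D(1) B_odd by blast
  ultimately have balanced: "parity_balanced (eps' N C)"
    unfolding D(2) by (rule parity_balanced_Union_odd_pairs)
  have N_eps: "N \<notin> eps' N C" "N - 1 \<notin> eps' N C" using D N_B N1_B by blast+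
  then have not_XM: "C \<notin> XM N" using N_mem_eps'_XM[OF odd_N] by blast
  then have "C \<in> XP N" using C unfolding XX_def by blast
  then have star: "starP N C" and II: "condII N C" unfolding XP_def by auto
  obtain xs where seq: "seqok C xs" using star unfolding starP_def by blast
  interpret star_seq N C xs "length xs div 2"
    using star seq seqokD(1)[OF seq] by unfold_locales
  show ?thesis
  proof (cases "card (B0 C) = 0")
    case True
    have "N \<notin> \<Union>C" using II unfolding condII_def by simp
    then have "N - 1 \<notin> \<Union>C" using N_minus_1_mem_eps'[OF starP_PN[OF star] True] N_eps(2) by blast
    then show ?thesis using \<open>C \<in> XP N\<close> True unfolding X0P'_def by blast
  next
    case False
    interpret XP_seq N C xs "length xs div 2"
      using star seq seqokD(1)[OF seq] odd_N II not_XM card_B0 False by unfold_locales auto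
    show ?thesis using not_parity_balanced_eps' balanced by contradiction
  qed
qed

theorem mainTheorem9:
  fixes N :: nat and B B' :: "nat set set"
  assumes "N \<ge> 3" and "odd N"
    and "B' \<in> XP N" and "B \<in> X0P' N"
    and "preceq N B' B"
  shows "B' \<in> X0P' N"
proof -
  have "(stepR N)\<^sup>*\<^sup>* B' B" using assms(5) unfolding preceq_def by blast
  then show ?thesis
  proof (induction rule: converse_rtranclp_induct)
    case base
    show ?case using assms(4) .
  next
    case (step C D)
    then show ?case using X0P'_of_eps'_in_spanB[OF assms(2)] unfolding stepR_def by blast
  qed
qed

end
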